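(* Let $f(z)=z+\sum_{n=2}^{\infty}a_nz^n\in\mathcal{S}^{*}_{\rho}$ and set $$\Omega_1:=a_3a_6-a_4a_5-a_2(a_2a_6-a_3a_5)+a_4(a_2a_4-a_3^2).$$ Then $$|\Omega_1|\le \frac{265984+32000\sqrt{3/43}+37760\sqrt{30/61}+29184\sqrt{285/41}}{460800}\approx 0.820011 .$$
   Context: Let $\mathbb{D}=\{z\in\mathbb{C}:|z|<1\}$. For analytic $g_1,g_2$ on $\mathbb{D}$, $g_1\prec g_2$ means there is an analytic $w:\mathbb{D}\to\mathbb{D}$ with $w(0)=0$ such that $g_1=g_2\circ w$. Here $\sinh^{-1}$ denotes the principal branch of the inverse hyperbolic sine with $\sinh^{-1}(0)=0$, analytic on $\mathbb{D}$. The class $\mathcal{S}^{*}_{\rho}$ consists of all univalent analytic functions $f$ on $\mathbb{D}$ with $f(z)=z+\sum_{n\ge2}a_nz^n$ such that $\frac{zf'(z)}{f(z)}\prec 1+\sinh^{-1}(z)$. *)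

theory Defs
  imports "HOL-Analysis.Analysis"
begin

definition subordinate :: "(complex \<Rightarrow> complex) \<Rightarrow> (complex \<Rightarrow> complex) \<Rightarrow> bool" where
  "subordinate g1 g2 \<longleftrightarrow>
     (\<exists>w. w analytic_on ball 0 1 \<and> w ` ball 0 1 \<subseteq> ball 0 1 \<and> w 0 = 0 \<and>
          (\<forall>z\<in>ball 0 1. g1 z = g2 (w z)))"

definition taylor_coeff :: "(complex \<Rightarrow> complex) \<Rightarrow> nat \<Rightarrow> complex" where
  "taylor_coeff f n = (deriv ^^ n) f 0 / of_nat (fact n)"

text \<open>The class S*_rho. The function z f'(z)/f(z) has a removable singularity at 0
  (value 1); we take that value at z = 0.\<close>
definition S_star_rho :: "(complex \<Rightarrow> complex) set" where
  "S_star_rho = {f. f analytic_on ball 0 1 \<and> inj_on f (ball 0 1) \<and> f 0 = 0 \<and> deriv f 0 = 1 \<and>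
      subordinate (\<lambda>z. if z = 0 then 1 else z * deriv f z / f z) (\<lambda>z. 1 + arsinh z)}"

end

theory Submission
  imports Defs "HOL-Complex_Analysis.Complex_Analysis"
begin

unbundle no vec_syntax \<comment> \<open>\<open>$\<close> is \<open>fps_nth\<close> throughout\<close>

text \<open>If \<open>z f'(z)/f(z) = 1 + arsinh (w z)\<close> with a Schwarz function \<open>w\<close>, then
  \<open>g = z f'/f - 1\<close> satisfies \<open>w = sinh \<circ> g\<close>, and \<open>z f' = (1 + g) f\<close>.  Comparing Taylor
  coefficients expresses \<open>a\<^sub>2, \<dots>, a\<^sub>6\<close> as polynomials in the coefficients
  \<open>c\<^sub>1, \<dots>, c\<^sub>5\<close> of \<open>w\<close>, so that \<open>\<Omega>\<^sub>1\<close> becomes an explicit polynomial of degree 7 in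
  them.  Cauchy's estimate gives \<open>|c\<^sub>k| \<le> 1\<close>, and the triangle inequality then bounds
  \<open>|\<Omega>\<^sub>1|\<close> by the sum of the absolute values of the coefficients, \<open>2929/3600 \<approx> 0.8136\<close>,
  which is already below the stated constant.\<close>

lemma sinh_arsinh_complex: "sinh (arsinh (u::complex)) = u"
proof -
  define s where "s = csqrt (u\<^sup>2 + 1)"
  have s_sq: "s\<^sup>2 = u\<^sup>2 + 1" by (simp add: s_def)
  have nz: "u + s \<noteq> 0"
  proof
    assume "u + s = 0"
    then have "s = -u" by (simp add: add_eq_0_iff2)
    with s_sq show False by simp
  qed
  have "arsinh u = ln (u + s)" by (simp add: arsinh_def s_def csqrt_conv_powr)
  then have "sinh (arsinh u) = ((u + s) - inverse (u + s)) / 2"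
    using nz by (simp add: sinh_ln_complex)
  also have "(u + s) - inverse (u + s) = ((u + s) * (u + s) - 1) / (u + s)"
    using nz by (simp add: field_simps)
  also have "(u + s) * (u + s) - 1 = (2 * u) * (u + s)"
    using s_sq by (simp add: power2_eq_square algebra_simps)
  finally show ?thesis using nz by simp
qed

lemma analytic_at_0_arsinh_complex: "(arsinh :: complex \<Rightarrow> complex) analytic_on {0}"
proof -
  have "(\<lambda>z::complex. ln (z + csqrt (z\<^sup>2 + 1))) analytic_on {0}"
    by (intro analytic_intros) (auto simp: complex_nonpos_Reals_iff)
  moreover have "(\<lambda>z::complex. ln (z + csqrt (z\<^sup>2 + 1))) = arsinh"
    by (rule ext) (simp add: arsinh_def csqrt_conv_powr)
  ultimately show ?thesis by simp
qed

lemma norm_higher_deriv_div_fact_le_1: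
  fixes w :: "complex \<Rightarrow> complex"
  assumes hol: "w holomorphic_on ball 0 1" and maps: "w ` ball 0 1 \<subseteq> ball 0 1"
  shows "norm ((deriv ^^ n) w 0 / fact n) \<le> 1"
proof (cases "n = 0")
  case True
  have "w 0 \<in> ball 0 1" using maps by (meson centre_in_ball image_subset_iff zero_less_one)
  with True show ?thesis by simp
next
  case False
  show ?thesis
  proof (rule field_le_mult_one_interval)
    fix t :: real
    assume t: "0 < t" "t < 1"
    define r where "r = root n t"
    have r: "0 < r" "r < 1" and rn: "r ^ n = t" using t False by (auto simp: r_def)
    have "norm ((deriv ^^ n) w 0) \<le> fact n * 1 / r ^ n"
    proof (rule Cauchy_inequality)
      show "w holomorphic_on ball 0 r" "continuous_on (cball 0 r) w"
        using r by (auto intro!: holomorphic_on_subset[OF hol] holomorphic_on_imp_continuous_on)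
      show "norm (w x) \<le> 1" if "norm (0 - x) = r" for x
      proof -
        have "x \<in> ball 0 1" using that r by auto
        then have "w x \<in> ball 0 1" using maps by blast
        then show ?thesis by simp
      qed
    qed (use r in auto)
    then show "t * norm ((deriv ^^ n) w 0 / fact n) \<le> 1"
      using r rn t by (simp add: norm_divide field_simps)
  qed
qed

definition fps_sinh :: "'a::field_char_0 fps" where
  "fps_sinh = fps_const (1/2) * (fps_exp 1 - fps_exp (-1))"

lemma has_fps_expansion_sinh: "sinh has_fps_expansion (fps_sinh :: complex fps)"
proof -
  have "(\<lambda>z::complex. 1/2 * (exp z - exp (-z))) has_fps_expansion fps_sinh"
    unfolding fps_sinh_def
    by (intro has_fps_expansion_cmult_left has_fps_expansion_diff
          has_fps_expansion_exp1 has_fps_expansion_exp_neg1)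
  moreover have "(\<lambda>z::complex. 1/2 * (exp z - exp (-z))) = sinh"
    by (rule ext) (simp add: sinh_field_def)
  ultimately show ?thesis by simp
qed

lemma fps_sinh_nth: "(fps_sinh :: 'a::field_char_0 fps) $ n = (1 - (-1) ^ n) / (2 * fact n)"
  by (simp add: fps_sinh_def fps_exp_def field_simps)

lemma fps_sinh_compose_nth:
  fixes G :: "'a::field_char_0 fps"
  assumes "G $ 0 = 0"
  shows "(fps_sinh oo G) $ 1 = G $ 1" "(fps_sinh oo G) $ 2 = G $ 2"
    "(fps_sinh oo G) $ 3 = G $ 3 + (G $ 1)^3 / 6"
    "(fps_sinh oo G) $ 4 = G $ 4 + (G $ 1)^2 * G $ 2 / 2"
    "(fps_sinh oo G) $ 5 = G $ 5 + ((G $ 1)^2 * G $ 3 + G $ 1 * (G $ 2)^2) / 2 + (G $ 1)^5 / 120"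
  using assms
  by (simp_all add: fps_compose_nth fps_sinh_nth fps_mult_nth numeral_eq_Suc atLeast0AtMost
      power2_eq_square power3_eq_cube field_simps)

lemma fps_X_deriv_eq_mult_nth:
  fixes F G :: "'a::comm_ring_1 fps"
  assumes "fps_X * fps_deriv F = (1 + G) * F" and "n \<ge> 1"
  shows "of_nat n * F $ n = F $ n + (\<Sum>i=0..n. G $ i * F $ (n - i))"
proof -
  have "of_nat n * F $ n = (fps_X * fps_deriv F) $ n"
    using \<open>n \<ge> 1\<close> by (cases n) auto
  also have "\<dots> = F $ n + (G * F) $ n"
    by (simp add: assms(1) distrib_right)
  finally show ?thesis by (simp add: fps_mult_nth)
qed

lemma fps_X_deriv_eq_mult_coeffs:
  fixes F G :: "'a::field_char_0 fps"
  assumes E: "fps_X * fps_deriv F = (1 + G) * F"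
    and F0: "F $ 0 = 0" and F1: "F $ 1 = 1" and G0: "G $ 0 = 0"
  shows "F $ 2 = G $ 1" "2 * F $ 3 = G $ 1 * F $ 2 + G $ 2"
    "3 * F $ 4 = G $ 1 * F $ 3 + G $ 2 * F $ 2 + G $ 3"
    "4 * F $ 5 = G $ 1 * F $ 4 + G $ 2 * F $ 3 + G $ 3 * F $ 2 + G $ 4"
    "5 * F $ 6 = G $ 1 * F $ 5 + G $ 2 * F $ 4 + G $ 3 * F $ 3 + G $ 4 * F $ 2 + G $ 5"
  using fps_X_deriv_eq_mult_nth[OF E, of 2] fps_X_deriv_eq_mult_nth[OF E, of 3]
    fps_X_deriv_eq_mult_nth[OF E, of 4] fps_X_deriv_eq_mult_nth[OF E, of 5]
    fps_X_deriv_eq_mult_nth[OF E, of 6] F0 F1 G0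
  by (simp_all add: eval_nat_numeral atLeast0_atMost_Suc)

lemma S_star_rho_schwarz_function:
  assumes "f \<in> S_star_rho"
  obtains w where "w analytic_on ball 0 1" "w ` ball 0 1 \<subseteq> ball 0 1" "w 0 = 0"
    "\<And>z. z \<in> ball 0 1 \<Longrightarrow> z * deriv f z = (1 + arsinh (w z)) * f z"
proof -
  from assms have inj: "inj_on f (ball 0 1)" and f0: "f 0 = 0"
    and sub: "subordinate (\<lambda>z. if z = 0 then 1 else z * deriv f z / f z) (\<lambda>z. 1 + arsinh z)"
    unfolding S_star_rho_def by auto
  from sub obtain w where w: "w analytic_on ball 0 1" "w ` ball 0 1 \<subseteq> ball 0 1" "w 0 = 0"
    and eq: "\<And>z. z \<in> ball 0 1 \<Longrightarrow>
               (if z = 0 then 1 else z * deriv f z / f z) = 1 + arsinh (w z)"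
    unfolding subordinate_def by blast
  have "z * deriv f z = (1 + arsinh (w z)) * f z" if z: "z \<in> ball 0 1" for z
  proof (cases "z = 0")
    case False
    have "f z \<noteq> 0"
      using inj z False f0 by (metis centre_in_ball inj_on_def zero_less_one)
    then show ?thesis using eq[OF z] False by (simp add: divide_eq_eq)
  qed (simp add: f0)
  with w that show ?thesis by blast
qed

lemma S_star_rho_fps_relations:
  assumes "f \<in> S_star_rho"
  obtains G :: "complex fps" where "G $ 0 = 0"
    "fps_X * fps_deriv (fps_expansion f 0) = (1 + G) * fps_expansion f 0"
    "\<And>n. norm ((fps_sinh oo G) $ n) \<le> 1"
proof -
  obtain w where w_an: "w analytic_on ball 0 1" and w_maps: "w ` ball 0 1 \<subseteq> ball 0 1"
    and w0: "w 0 = 0" and ode: "\<And>z. z \<in> ball 0 1 \<Longrightarrow> z * deriv f z = (1 + arsinh (w z)) * f z"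
    using S_star_rho_schwarz_function[OF assms] by blast
  define g where "g = (\<lambda>z. arsinh (w z))"
  define F where "F = fps_expansion f 0"
  define G where "G = fps_expansion g 0"
  have "f analytic_on {0}"
    using assms by (auto simp: S_star_rho_def intro: analytic_on_subset)
  then have hF: "f has_fps_expansion F"
    unfolding F_def by (rule analytic_at_imp_has_fps_expansion_0)
  have "w analytic_on {0}" using w_an by (rule analytic_on_subset) auto
  then have hW: "w has_fps_expansion fps_expansion w 0"
    by (rule analytic_at_imp_has_fps_expansion_0)
  have "(arsinh \<circ> w) analytic_on {0}"
    using analytic_on_compose_gen[OF \<open>w analytic_on {0}\<close> analytic_at_0_arsinh_complex] w0 by simp
  then have hG: "g has_fps_expansion G"
    unfolding G_def g_def o_def by (rule analytic_at_imp_has_fps_expansion_0)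
  have G0: "G $ 0 = 0" using fps_nth_fps_expansion[OF hG, of 0] by (simp add: g_def w0)
  have "eventually (\<lambda>z. (1 + g z) * f z = z * deriv f z) (nhds 0)"
    using eventually_nhds_in_open[of "ball 0 1" "0::complex"] ode
    by (auto simp: g_def elim!: eventually_mono)
  then have "(\<lambda>z. z * deriv f z) has_fps_expansion (1 + G) * F"
    by (rule has_fps_expansion_cong[THEN iffD1, OF _ refl])
       (intro has_fps_expansion_mult has_fps_expansion_add has_fps_expansion_1 hG hF)
  moreover have "(\<lambda>z. z * deriv f z) has_fps_expansion fps_X * fps_deriv F"
    by (intro has_fps_expansion_mult has_fps_expansion_fps_X has_fps_expansion_deriv hF)
  ultimately have E: "fps_X * fps_deriv F = (1 + G) * F"
    by (rule fps_expansion_unique_complex[rotated])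
  have "sinh \<circ> g = w" by (rule ext) (simp add: g_def sinh_arsinh_complex)
  then have "w has_fps_expansion (fps_sinh oo G)"
    using has_fps_expansion_compose[OF has_fps_expansion_sinh hG G0] by simp
  then have "fps_sinh oo G = fps_expansion w 0"
    by (rule fps_expansion_unique_complex[OF _ hW])
  moreover have "norm (fps_expansion w 0 $ n) \<le> 1" for n
    using norm_higher_deriv_div_fact_le_1[OF analytic_imp_holomorphic[OF w_an] w_maps]
    by (simp add: fps_nth_fps_expansion[OF hW])
  ultimately show ?thesis using that G0 E unfolding F_def by simp
qed

lemma S_star_rho_fps_expansion_nth_01:
  assumes "f \<in> S_star_rho"
  shows "fps_expansion f 0 $ 0 = 0" "fps_expansion f 0 $ 1 = 1"
  using assms by (simp_all add: S_star_rho_def fps_expansion_def)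

definition Omega1 :: "complex \<Rightarrow> complex \<Rightarrow> complex \<Rightarrow> complex \<Rightarrow> complex \<Rightarrow> complex" where
  "Omega1 a2 a3 a4 a5 a6 = a3 * a6 - a4 * a5 - a2 * (a2 * a6 - a3 * a5) + a4 * (a2 * a4 - a3\<^sup>2)"

definition Omega1_schwarz :: "complex \<Rightarrow> complex \<Rightarrow> complex \<Rightarrow> complex \<Rightarrow> complex \<Rightarrow> complex" where
  "Omega1_schwarz c1 c2 c3 c4 c5 =
     - (1/12 * (c3*c4)) + 1/10 * (c2*c5) - 1/24 * (c2^2*c3) + 1/8 * (c1*c2*c4)
     - 9/80 * (c1*c2^3) - 1/10 * (c1^2*c5) + 3/40 * (c1^2*c2*c3) - 1/36 * (c1^3*c4)
     - 19/720 * (c1^3*c2^2) + 11/120 * (c1^4*c3) + 7/600 * (c1^5*c2) - 67/3600 * c1^7"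

lemma coeffs_in_schwarz_coeffs:
  fixes a2 a3 a4 a5 a6 g1 g2 g3 g4 g5 c1 c2 c3 c4 c5 :: complex
  assumes "c1 = g1" "c2 = g2" "c3 = g3 + g1^3/6" "c4 = g4 + g1^2 * g2/2"
    "c5 = g5 + (g1^2 * g3 + g1 * g2^2)/2 + g1^5/120"
    "a2 = g1" "2 * a3 = g1 * a2 + g2" "3 * a4 = g1 * a3 + g2 * a2 + g3"
    "4 * a5 = g1 * a4 + g2 * a3 + g3 * a2 + g4"
    "5 * a6 = g1 * a5 + g2 * a4 + g3 * a3 + g4 * a2 + g5"
  shows "a2 = c1" "a3 = (c1^2 + c2)/2"
    "a4 = c1^3/9 + c1*c2/2 + c3/3"
    "a5 = - (c1^4/72) + c1^2*c2/8 + c1*c3/3 + c2^2/8 + c4/4"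
    "a6 = - (c1^5/225) - 5/72*c1^3*c2 + c1^2*c3/15 + c1*c2^2/40 + c1*c4/4 + c2*c3/6 + c5/5"
proof -
  have g3: "g3 = c3 - c1^3/6" and g4: "g4 = c4 - c1^2*c2/2"
    using assms(1-4) by (simp_all add: field_simps)
  have g5: "g5 = c5 - (c1^2 * c3 + c1 * c2^2)/2 + 3/40 * c1^5"
    using assms(1-3,5)
    by (simp add: field_simps; simp add: algebra_simps power2_eq_square power3_eq_cube eval_nat_numeral)
  note cs = assms(1,2)[symmetric]
  show A2: "a2 = c1" using assms by simp
  have "a3 = (g1 * a2 + g2)/2" using assms(7) by (simp add: field_simps)
  also have "\<dots> = (c1^2 + c2)/2" unfolding A2 cs by (simp add: power2_eq_square)
  finally show A3: "a3 = (c1^2 + c2)/2" .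
  have "a4 = (g1 * a3 + g2 * a2 + g3)/3" using assms(8) by (simp add: field_simps)
  also have "\<dots> = c1^3/9 + c1*c2/2 + c3/3" unfolding A2 A3 g3 cs
    by (simp add: field_simps; simp add: algebra_simps power2_eq_square power3_eq_cube)
  finally show A4: "a4 = c1^3/9 + c1*c2/2 + c3/3" .
  have "a5 = (g1 * a4 + g2 * a3 + g3 * a2 + g4)/4" using assms(9) by (simp add: field_simps)
  also have "\<dots> = - (c1^4/72) + c1^2*c2/8 + c1*c3/3 + c2^2/8 + c4/4" unfolding A2 A3 A4 g3 g4 cs
    by (simp add: field_simps; simp add: algebra_simps power2_eq_square power3_eq_cube eval_nat_numeral)
  finally show A5: "a5 = - (c1^4/72) + c1^2*c2/8 + c1*c3/3 + c2^2/8 + c4/4" .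
  have "a6 = (g1 * a5 + g2 * a4 + g3 * a3 + g4 * a2 + g5)/5" using assms(10) by (simp add: field_simps)
  also have "\<dots> = - (c1^5/225) - 5/72*c1^3*c2 + c1^2*c3/15 + c1*c2^2/40 + c1*c4/4 + c2*c3/6 + c5/5"
    unfolding A2 A3 A4 A5 g3 g4 g5 cs
    by (simp add: field_simps; simp add: algebra_simps power2_eq_square power3_eq_cube eval_nat_numeral)
  finally show "a6 = - (c1^5/225) - 5/72*c1^3*c2 + c1^2*c3/15 + c1*c2^2/40 + c1*c4/4 + c2*c3/6 + c5/5" .
qed

lemma Omega1_in_schwarz_coeffs:
  "Omega1 c1 ((c1^2 + c2)/2) (c1^3/9 + c1*c2/2 + c3/3)
      (- (c1^4/72) + c1^2*c2/8 + c1*c3/3 + c2^2/8 + c4/4)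
      (- (c1^5/225) - 5/72*c1^3*c2 + c1^2*c3/15 + c1*c2^2/40 + c1*c4/4 + c2*c3/6 + c5/5)
    = Omega1_schwarz c1 c2 c3 c4 c5"
  unfolding Omega1_def Omega1_schwarz_def
  by (simp add: field_simps power2_eq_square power3_eq_cube) (simp add: algebra_simps eval_nat_numeral)

lemma norm_Omega1_schwarz_le:
  assumes "norm c1 \<le> 1" "norm c2 \<le> 1" "norm c3 \<le> 1" "norm c4 \<le> 1" "norm c5 \<le> 1"
  shows "norm (Omega1_schwarz c1 c2 c3 c4 c5) \<le> 2929/3600"
proof -
  have term_le: "norm (c * m) \<le> r" if "norm m \<le> 1" "norm c = r" for c m :: complex and r
    using that by (metis mult_left_le norm_ge_zero norm_mult)
  have "norm (Omega1_schwarz c1 c2 c3 c4 c5) \<le> 1/12 + 1/10 + 1/24 + 1/8 + 9/80 + 1/10 + 3/40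
      + 1/36 + 19/720 + 11/120 + 7/600 + 67/3600"
    unfolding Omega1_schwarz_def diff_conv_add_uminus
    by (intro norm_triangle_mono; (subst norm_minus_cancel)?; rule term_le)
      (use assms in \<open>auto simp: norm_mult norm_power intro!: mult_le_one power_le_one\<close>)
  then show ?thesis by simp
qed

lemma Omega1_constant_ge: "2929/3600 \<le>
    (265984 + 32000 * sqrt (3/43) + 37760 * sqrt (30/61) + 29184 * sqrt (285/41)) / (460800::real)"
proof -
  have "26/100 \<le> sqrt (3/43::real)" "7/10 \<le> sqrt (30/61::real)" "263/100 \<le> sqrt (285/41::real)"
    by (rule real_le_rsqrt; simp add: power2_eq_square)+
  then show ?thesis by (simp add: divide_simps)
qed

theorem mainTheorem6:
  fixes f :: "complex \<Rightarrow> complex"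
  assumes "f \<in> S_star_rho"
  defines "a \<equiv> taylor_coeff f"
  shows "norm (a 3 * a 6 - a 4 * a 5 - a 2 * (a 2 * a 6 - a 3 * a 5) + a 4 * (a 2 * a 4 - (a 3)^2))
    \<le> (265984 + 32000 * sqrt (3/43) + 37760 * sqrt (30/61) + 29184 * sqrt (285/41)) / 460800"
proof -
  obtain G :: "complex fps" where G0: "G $ 0 = 0"
    and ode: "fps_X * fps_deriv (fps_expansion f 0) = (1 + G) * fps_expansion f 0"
    and c_le: "\<And>n. norm ((fps_sinh oo G) $ n) \<le> 1"
    using S_star_rho_fps_relations[OF assms(1)] by blast
  have a_nth: "a n = fps_expansion f 0 $ n" for n
    by (simp add: a_def taylor_coeff_def fps_expansion_def)
  note a_in_c = coeffs_in_schwarz_coeffs[OF fps_sinh_compose_nth[OF G0]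
      fps_X_deriv_eq_mult_coeffs[OF ode S_star_rho_fps_expansion_nth_01[OF assms(1)] G0]]
  let ?c = "\<lambda>n. (fps_sinh oo G) $ n"
  have "a 3 * a 6 - a 4 * a 5 - a 2 * (a 2 * a 6 - a 3 * a 5) + a 4 * (a 2 * a 4 - (a 3)^2)
      = Omega1 (a 2) (a 3) (a 4) (a 5) (a 6)"
    by (simp add: Omega1_def)
  also have "\<dots> = Omega1_schwarz (?c 1) (?c 2) (?c 3) (?c 4) (?c 5)"
    unfolding a_nth a_in_c by (rule Omega1_in_schwarz_coeffs)
  finally have "norm (a 3 * a 6 - a 4 * a 5 - a 2 * (a 2 * a 6 - a 3 * a 5) + a 4 * (a 2 * a 4 - (a 3)^2))
      \<le> 2929/3600"
    using norm_Omega1_schwarz_le[OF c_le c_le c_le c_le c_le] by simp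
  then show ?thesis using Omega1_constant_ge by linarith
qed

end
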